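(* Let $P$ be an NL poset on $X_n$ whose twin classes $\alpha_1,\ldots,\alpha_r$ all have the same size $m\ge1$. Then $H=\mathrm{Aut}(P_\equiv)$, where $H=\{\psi\in\mathrm{Aut}(P_\equiv): |\psi(\alpha)|=|\alpha| \text{ for every twin class }\alpha\}$. Moreover, $\mathrm{Aut}(P)\cong\mathrm{Aut}(P_\equiv)$ if and only if $m=1$, i.e., every twin class is a singleton.
   Context: Let $X_n=\{0,1,\ldots,n-1\}$. A naturally labeled (NL) poset on $X_n$ is a partial order $\preceq$ on $X_n$ such that $x\preceq y$ implies $x\le y$ in the usual integer order. $\mathrm{Aut}(P)$ is the group of bijections $\sigma$ of $X_n$ with $x\preceq y\iff\sigma(x)\preceq\sigma(y)$. For $x\in X_n$, $D(x)=\{z: z\prec x\}$, $U(x)=\{z: x\prec z\}$; $x,y$ are twins if $D(x)=D(y)$ and $U(x)=U(y)$, and the equivalence classes are the twin classes. The twin poset $P_\equiv$ is the set of twin classes ordered by $\alpha\preceq_\equiv\beta$ iff $x\preceq y$ for (any) $x\in\alpha$, $y\in\beta$; $\mathrm{Aut}(P_\equiv)$ is its automorphism group. *)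

theory Defs
  imports "HOL-Algebra.Algebra"
begin

text \<open>A naturally labeled poset on X_n = {0..<n}, given by its (reflexive) order relation R.\<close>
definition nl_poset :: "nat \<Rightarrow> (nat \<Rightarrow> nat \<Rightarrow> bool) \<Rightarrow> bool" where
  "nl_poset n R \<longleftrightarrow>
     (\<forall>x y. R x y \<longrightarrow> x < n \<and> y < n) \<and>
     (\<forall>x<n. R x x) \<and>
     (\<forall>x y. R x y \<and> R y x \<longrightarrow> x = y) \<and>
     (\<forall>x y z. R x y \<and> R y z \<longrightarrow> R x z) \<and>
     (\<forall>x y. R x y \<longrightarrow> x \<le> y)"

definition down_set :: "nat \<Rightarrow> (nat \<Rightarrow> nat \<Rightarrow> bool) \<Rightarrow> nat \<Rightarrow> nat set" where
  "down_set n R x = {z \<in> {0..<n}. R z x \<and> z \<noteq> x}"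

definition up_set :: "nat \<Rightarrow> (nat \<Rightarrow> nat \<Rightarrow> bool) \<Rightarrow> nat \<Rightarrow> nat set" where
  "up_set n R x = {z \<in> {0..<n}. R x z \<and> z \<noteq> x}"

definition twins :: "nat \<Rightarrow> (nat \<Rightarrow> nat \<Rightarrow> bool) \<Rightarrow> nat \<Rightarrow> nat \<Rightarrow> bool" where
  "twins n R x y \<longleftrightarrow> down_set n R x = down_set n R y \<and> up_set n R x = up_set n R y"

definition twin_classes :: "nat \<Rightarrow> (nat \<Rightarrow> nat \<Rightarrow> bool) \<Rightarrow> nat set set" where
  "twin_classes n R = (\<lambda>x. {y \<in> {0..<n}. twins n R x y}) ` {0..<n}"

text \<open>Order of the twin poset: alpha below beta iff x below y for some (equivalently any) x in alpha, y in beta.\<close>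
definition twin_le :: "(nat \<Rightarrow> nat \<Rightarrow> bool) \<Rightarrow> nat set \<Rightarrow> nat set \<Rightarrow> bool" where
  "twin_le R \<alpha> \<beta> \<longleftrightarrow> (\<exists>x\<in>\<alpha>. \<exists>y\<in>\<beta>. R x y)"

definition aut_group :: "'a set \<Rightarrow> ('a \<Rightarrow> 'a \<Rightarrow> bool) \<Rightarrow> ('a \<Rightarrow> 'a) monoid" where
  "aut_group S R = (BijGroup S)\<lparr>carrier := {f \<in> Bij S. \<forall>x\<in>S. \<forall>y\<in>S. R x y \<longleftrightarrow> R (f x) (f y)}\<rparr>"

definition poset_aut_group :: "nat \<Rightarrow> (nat \<Rightarrow> nat \<Rightarrow> bool) \<Rightarrow> (nat \<Rightarrow> nat) monoid" where
  "poset_aut_group n R = aut_group {0..<n} R"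

definition twin_aut_group :: "nat \<Rightarrow> (nat \<Rightarrow> nat \<Rightarrow> bool) \<Rightarrow> (nat set \<Rightarrow> nat set) monoid" where
  "twin_aut_group n R = aut_group (twin_classes n R) (twin_le R)"

definition size_pres_auts :: "nat \<Rightarrow> (nat \<Rightarrow> nat \<Rightarrow> bool) \<Rightarrow> (nat set \<Rightarrow> nat set) set" where
  "size_pres_auts n R = {\<psi> \<in> carrier (twin_aut_group n R). \<forall>\<alpha>\<in>twin_classes n R. card (\<psi> \<alpha>) = card \<alpha>}"

end

theory Submission
  imports Defs "HOL-Library.Disjoint_Sets"
begin

(* Sending an automorphism f of P to the map alpha |-> f ` alpha on twin classes gives a
   homomorphism twin_proj from Aut(P) to the automorphism group of the twin poset, and its image
   is exactly H: twins are incomparable and the order between non-twins only depends on their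
   twin classes, so for psi in H any permutation moving each class alpha bijectively onto psi alpha
   is an automorphism of P over psi. If all classes have the same size, H is the whole group.
   A transposition of two twins lies in the kernel, so twin_proj is injective iff all classes
   are singletons; as the groups are finite and twin_proj is onto, they are isomorphic iff
   twin_proj is injective. *)

lemma carrier_aut_group:
  "carrier (aut_group S R) = {f \<in> Bij S. \<forall>x\<in>S. \<forall>y\<in>S. R x y \<longleftrightarrow> R (f x) (f y)}"
  by (simp add: aut_group_def)

lemma mult_aut_group:
  "f \<in> Bij S \<Longrightarrow> g \<in> Bij S \<Longrightarrow> f \<otimes>\<^bsub>aut_group S R\<^esub> g = compose S f g"
  by (simp add: aut_group_def BijGroup_def)

lemma id_in_aut_group: "(\<lambda>x\<in>S. x) \<in> carrier (aut_group S R)"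
  by (simp add: carrier_aut_group id_Bij)

lemma finite_carrier_aut_group:
  assumes "finite S"
  shows "finite (carrier (aut_group S R))"
proof (rule finite_subset)
  show "carrier (aut_group S R) \<subseteq> S \<rightarrow>\<^sub>E S"
    by (auto simp: carrier_aut_group PiE_def Bij_imp_extensional dest: Bij_imp_funcset)
  show "finite (S \<rightarrow>\<^sub>E S)"
    using assms by (simp add: finite_PiE)
qed

lemma bij_image_strict_predecessors:
  assumes f: "bij_betw f S S" and Q: "\<forall>x\<in>S. \<forall>y\<in>S. Q x y \<longleftrightarrow> Q (f x) (f y)" and x: "x \<in> S"
  shows "f ` {z \<in> S. Q z x \<and> z \<noteq> x} = {z \<in> S. Q z (f x) \<and> z \<noteq> f x}"
proof -
  have "f ` {z \<in> S. Q z x \<and> z \<noteq> x} = {w \<in> f ` S. \<exists>z\<in>S. w = f z \<and> Q z x \<and> z \<noteq> x}"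
    by blast
  also have "\<dots> = {w \<in> S. Q w (f x) \<and> w \<noteq> f x}"
    using f Q x by (auto simp: bij_betw_def inj_on_eq_iff)
  finally show ?thesis .
qed

lemma partition_on_lift_bij:
  assumes P: "partition_on A P" and "finite A" and \<psi>: "bij_betw \<psi> P P"
    and card: "\<And>B. B \<in> P \<Longrightarrow> card (\<psi> B) = card B"
  obtains g where "g \<in> Bij A" and "\<And>B. B \<in> P \<Longrightarrow> g ` B = \<psi> B"
proof -
  have fin: "finite B" if "B \<in> P" for B
    using P \<open>finite A\<close> that by (metis Union_upper finite_subset partition_onD1)
  have "\<forall>B\<in>P. \<exists>h. bij_betw h B (\<psi> B)"
    using fin card \<psi> by (metis bij_betwE finite_same_card_bij)
  then obtain h where h: "\<And>B. B \<in> P \<Longrightarrow> bij_betw (h B) B (\<psi> B)"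
    by metis
  define block where "block x = (THE B. B \<in> P \<and> x \<in> B)" for x
  have block: "block x = B" if "B \<in> P" "x \<in> B" for x B
    unfolding block_def
    by (rule the_equality) (use P that in \<open>auto simp: partition_on_def disjoint_def\<close>)
  define g where "g = (\<lambda>x\<in>A. h (block x) x)"
  have g_block: "bij_betw g B (\<psi> B)" if B: "B \<in> P" for B
  proof -
    have "B \<subseteq> A"
      using P B by (auto simp: partition_on_def)
    then have "\<And>x. x \<in> B \<Longrightarrow> g x = h B x"
      using block[OF B] by (auto simp: g_def)
    then show ?thesis
      using h[OF B] bij_betw_cong by blast
  qed
  have "disjoint_family_on \<psi> P"
    using \<psi> P by (intro disjoint_image_disjoint_family_on)
      (auto simp: bij_betw_def partition_on_def)
  then have "bij_betw g (\<Union>B\<in>P. B) (\<Union>B\<in>P. \<psi> B)"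
    using g_block by (rule bij_betw_UNION_disjoint)
  then have "bij_betw g A A"
    using P \<psi> by (simp add: partition_on_def bij_betw_def)
  then have "g \<in> Bij A"
    by (simp add: Bij_def g_def)
  then show ?thesis
    using that g_block bij_betw_imp_surj_on by blast
qed

lemma twins_refl: "twins n R x x"
  and twins_sym: "twins n R x y \<Longrightarrow> twins n R y x"
  and twins_trans: "twins n R x y \<Longrightarrow> twins n R y z \<Longrightarrow> twins n R x z"
  by (simp_all add: twins_def)

locale nat_relation =
  fixes n :: nat and R :: "nat \<Rightarrow> nat \<Rightarrow> bool"
begin

abbreviation "auts \<equiv> carrier (poset_aut_group n R)"
abbreviation "twin_auts \<equiv> carrier (twin_aut_group n R)"

definition twin_class :: "nat \<Rightarrow> nat set" where
  "twin_class x = {y \<in> {0..<n}. twins n R x y}"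

lemma twin_classes_eq: "twin_classes n R = twin_class ` {0..<n}"
  by (simp add: twin_classes_def twin_class_def)

lemma mem_twin_class: "y \<in> twin_class x \<longleftrightarrow> y < n \<and> twins n R x y"
  by (simp add: twin_class_def)

lemma twin_class_self: "x < n \<Longrightarrow> x \<in> twin_class x"
  by (simp add: mem_twin_class twins_refl)

lemma twin_class_subset: "twin_class x \<subseteq> {0..<n}"
  by (auto simp: twin_class_def)

lemma twin_class_eq_iff: "y < n \<Longrightarrow> twin_class x = twin_class y \<longleftrightarrow> twins n R x y"
  by (auto simp: twin_class_def intro: twins_refl twins_sym twins_trans)

lemma twin_class_eqI: "\<alpha> \<in> twin_classes n R \<Longrightarrow> y \<in> \<alpha> \<Longrightarrow> \<alpha> = twin_class y"
  by (auto simp: twin_classes_eq twin_class_def intro: twins_sym twins_trans)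

lemma partition_on_twin_classes: "partition_on {0..<n} (twin_classes n R)"
proof (rule partition_onI)
  show "\<Union> (twin_classes n R) = {0..<n}"
    using twin_class_self twin_class_subset by (auto simp: twin_classes_eq)
  show "disjnt \<alpha> \<beta>" if "\<alpha> \<in> twin_classes n R" "\<beta> \<in> twin_classes n R" "\<alpha> \<noteq> \<beta>" for \<alpha> \<beta>
    using that twin_class_eqI by (metis disjnt_iff)
  show "{} \<notin> twin_classes n R"
    using twin_class_self by (fastforce simp: twin_classes_eq)
qed

lemma auts_iff: "f \<in> auts \<longleftrightarrow>
    f \<in> Bij {0..<n} \<and> (\<forall>x\<in>{0..<n}. \<forall>y\<in>{0..<n}. R x y \<longleftrightarrow> R (f x) (f y))"
  by (simp add: poset_aut_group_def carrier_aut_group)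

lemma twin_auts_iff: "\<psi> \<in> twin_auts \<longleftrightarrow> \<psi> \<in> Bij (twin_classes n R) \<and>
    (\<forall>\<alpha>\<in>twin_classes n R. \<forall>\<beta>\<in>twin_classes n R. twin_le R \<alpha> \<beta> \<longleftrightarrow> twin_le R (\<psi> \<alpha>) (\<psi> \<beta>))"
  by (simp add: twin_aut_group_def carrier_aut_group)

lemma aut_Bij: "f \<in> auts \<Longrightarrow> f \<in> Bij {0..<n}"
  by (simp add: auts_iff)

lemma aut_rel_iff: "f \<in> auts \<Longrightarrow> x < n \<Longrightarrow> y < n \<Longrightarrow> R (f x) (f y) \<longleftrightarrow> R x y"
  by (simp add: auts_iff)

lemma aut_image: "f \<in> auts \<Longrightarrow> f ` {0..<n} = {0..<n}"
  by (drule aut_Bij) (simp add: Bij_def bij_betw_def)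

lemma aut_less: "f \<in> auts \<Longrightarrow> x < n \<Longrightarrow> f x < n"
  using aut_image by fastforce

lemma twin_aut_Bij: "\<psi> \<in> twin_auts \<Longrightarrow> \<psi> \<in> Bij (twin_classes n R)"
  by (simp add: twin_auts_iff)

lemma twin_aut_le_iff:
  "\<psi> \<in> twin_auts \<Longrightarrow> \<alpha> \<in> twin_classes n R \<Longrightarrow> \<beta> \<in> twin_classes n R \<Longrightarrow>
    twin_le R (\<psi> \<alpha>) (\<psi> \<beta>) \<longleftrightarrow> twin_le R \<alpha> \<beta>"
  by (simp add: twin_auts_iff)

lemma aut_twins_iff:
  assumes f: "f \<in> auts" and x: "x < n" and y: "y < n"
  shows "twins n R (f x) (f y) \<longleftrightarrow> twins n R x y"
proof -
  have bij: "bij_betw f {0..<n} {0..<n}" and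
    hom: "\<forall>x\<in>{0..<n}. \<forall>y\<in>{0..<n}. R x y \<longleftrightarrow> R (f x) (f y)"
    using aut_Bij[OF f] aut_rel_iff[OF f] by (auto simp: Bij_def)
  have down: "f ` down_set n R z = down_set n R (f z)" and up: "f ` up_set n R z = up_set n R (f z)"
    if "z < n" for z
    unfolding down_set_def up_set_def
    using bij_image_strict_predecessors[OF bij hom] that
      bij_image_strict_predecessors[OF bij, of "\<lambda>u v. R v u"] hom by auto
  have "inj_on f {0..<n}"
    using bij by (rule bij_betw_imp_inj_on)
  moreover have "down_set n R z \<subseteq> {0..<n}" "up_set n R z \<subseteq> {0..<n}" for z
    by (auto simp: down_set_def up_set_def)
  ultimately show ?thesis
    using x y by (simp add: twins_def inj_on_image_eq_iff flip: down up)
qed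

lemma image_twin_class:
  assumes f: "f \<in> auts" and x: "x < n"
  shows "f ` twin_class x = twin_class (f x)"
proof
  show "f ` twin_class x \<subseteq> twin_class (f x)"
    using aut_twins_iff[OF f x] aut_less[OF f] by (auto simp: twin_class_def)
  show "twin_class (f x) \<subseteq> f ` twin_class x"
  proof
    fix w assume w: "w \<in> twin_class (f x)"
    obtain z where "z < n" "w = f z"
      using w twin_class_subset aut_image[OF f] by (metis atLeastLessThan_iff imageE subsetD)
    then show "w \<in> f ` twin_class x"
      using w aut_twins_iff[OF f x] by (auto simp: twin_class_def)
  qed
qed

definition twin_proj :: "(nat \<Rightarrow> nat) \<Rightarrow> nat set \<Rightarrow> nat set" where
  "twin_proj f = (\<lambda>\<alpha>\<in>twin_classes n R. f ` \<alpha>)"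

lemma twin_proj_twin_class: "x < n \<Longrightarrow> twin_proj f (twin_class x) = f ` twin_class x"
  by (auto simp: twin_proj_def twin_classes_eq)

end

locale refl_nat_relation = nat_relation +
  assumes rel_bounded: "R x y \<Longrightarrow> x < n \<and> y < n"
    and rel_refl: "x < n \<Longrightarrow> R x x"
begin

lemma twins_rel_iff_eq:
  assumes "twins n R x y" and "x < n"
  shows "R x y \<longleftrightarrow> x = y"
proof
  assume "R x y"
  show "x = y"
  proof (rule ccontr)
    assume "x \<noteq> y"
    then have "x \<in> down_set n R y"
      using \<open>R x y\<close> rel_bounded by (auto simp: down_set_def)
    then have "x \<in> down_set n R x"
      using \<open>twins n R x y\<close> by (simp add: twins_def)
    then show False
      by (simp add: down_set_def)
  qed
qed (use rel_refl assms in simp)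

lemma rel_twins_transfer:
  assumes x: "twins n R x x'" and y: "twins n R y y'" and "\<not> twins n R x y" and "R x y"
  shows "R x' y'"
proof -
  have "y \<in> up_set n R x"
    using assms(3,4) rel_bounded twins_refl by (auto simp: up_set_def)
  then have "x' \<in> down_set n R y"
    using x rel_bounded by (auto simp: twins_def up_set_def down_set_def)
  then have "x' \<in> down_set n R y'"
    using y by (simp add: twins_def)
  then show ?thesis
    by (simp add: down_set_def)
qed

lemma twin_le_twin_class_iff:
  assumes x: "x < n" and y: "y < n"
  shows "twin_le R (twin_class x) (twin_class y) \<longleftrightarrow> twins n R x y \<or> R x y"
proof
  assume "twin_le R (twin_class x) (twin_class y)"
  then obtain x' y' where "twins n R x x'" "twins n R y y'" "R x' y'"
    by (auto simp: twin_le_def mem_twin_class)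
  then show "twins n R x y \<or> R x y"
    using rel_twins_transfer twins_sym twins_trans by metis
next
  assume "twins n R x y \<or> R x y"
  then show "twin_le R (twin_class x) (twin_class y)"
    using twin_class_self twin_class_eq_iff rel_refl x y unfolding twin_le_def by metis
qed

lemma twin_proj_in_twin_auts:
  assumes f: "f \<in> auts"
  shows "twin_proj f \<in> twin_auts"
proof -
  have proj: "twin_proj f (twin_class x) = twin_class (f x)" if "x < n" for x
    using that by (simp add: twin_proj_twin_class image_twin_class[OF f])
  have "twin_proj f ` twin_classes n R = (\<lambda>x. twin_proj f (twin_class x)) ` {0..<n}"
    by (simp add: twin_classes_eq image_image)
  also have "\<dots> = twin_class ` f ` {0..<n}"
    unfolding image_image by (rule image_cong) (simp_all add: proj)
  also have "f ` {0..<n} = {0..<n}"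
    using f by (rule aut_image)
  finally have onto: "twin_proj f ` twin_classes n R = twin_classes n R"
    by (simp add: twin_classes_eq)
  have inj: "inj_on (twin_proj f) (twin_classes n R)"
  proof (rule inj_onI)
    fix \<alpha> \<beta> assume "\<alpha> \<in> twin_classes n R" "\<beta> \<in> twin_classes n R" "twin_proj f \<alpha> = twin_proj f \<beta>"
    then obtain x y where "x < n" "y < n" "\<alpha> = twin_class x" "\<beta> = twin_class y"
      and "twin_class (f x) = twin_class (f y)"
      using proj by (auto simp: twin_classes_eq)
    then show "\<alpha> = \<beta>"
      by (simp add: twin_class_eq_iff aut_twins_iff[OF f] aut_less[OF f])
  qed
  have le: "twin_le R \<alpha> \<beta> \<longleftrightarrow> twin_le R (twin_proj f \<alpha>) (twin_proj f \<beta>)"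
    if \<alpha>\<beta>: "\<alpha> \<in> twin_classes n R" "\<beta> \<in> twin_classes n R" for \<alpha> \<beta>
  proof -
    obtain x y where x: "x < n" "\<alpha> = twin_class x" and y: "y < n" "\<beta> = twin_class y"
      using \<alpha>\<beta> by (auto simp: twin_classes_eq)
    then show ?thesis
      using f by (simp add: proj twin_le_twin_class_iff aut_twins_iff aut_less aut_rel_iff)
  qed
  have "twin_proj f \<in> extensional (twin_classes n R)"
    by (simp add: twin_proj_def)
  with onto inj le show ?thesis
    unfolding twin_auts_iff Bij_def bij_betw_def by blast
qed

lemma twin_proj_hom: "twin_proj \<in> hom (poset_aut_group n R) (twin_aut_group n R)"
proof (rule homI)
  fix f g assume f: "f \<in> auts" and g: "g \<in> auts"
  then have "f \<in> Bij {0..<n}" "g \<in> Bij {0..<n}"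
    by (simp_all add: aut_Bij)
  then have "f \<otimes>\<^bsub>poset_aut_group n R\<^esub> g = compose {0..<n} f g"
    unfolding poset_aut_group_def by (rule mult_aut_group)
  moreover have "twin_proj f \<in> Bij (twin_classes n R)" "twin_proj g \<in> Bij (twin_classes n R)"
    using f g by (simp_all add: twin_proj_in_twin_auts twin_aut_Bij)
  then have "twin_proj f \<otimes>\<^bsub>twin_aut_group n R\<^esub> twin_proj g
      = compose (twin_classes n R) (twin_proj f) (twin_proj g)"
    unfolding twin_aut_group_def by (rule mult_aut_group)
  moreover have "twin_proj (compose {0..<n} f g)
      = compose (twin_classes n R) (twin_proj f) (twin_proj g)"
  proof (rule extensionalityI)
    fix \<alpha> assume "\<alpha> \<in> twin_classes n R"
    then obtain x where x: "x < n" and \<alpha>: "\<alpha> = twin_class x"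
      by (auto simp: twin_classes_eq)
    have "twin_proj (compose {0..<n} f g) \<alpha> = f ` g ` \<alpha>"
      using x twin_class_subset by (force simp: \<alpha> twin_proj_twin_class compose_def)
    also have "\<dots> = twin_proj f (twin_proj g \<alpha>)"
      using x by (simp add: \<alpha> twin_proj_twin_class image_twin_class[OF g] aut_less[OF g])
    finally show "twin_proj (compose {0..<n} f g) \<alpha>
        = compose (twin_classes n R) (twin_proj f) (twin_proj g) \<alpha>"
      using \<open>\<alpha> \<in> twin_classes n R\<close> by (simp add: compose_def)
  qed (simp_all add: twin_proj_def compose_def)
  ultimately show "twin_proj (f \<otimes>\<^bsub>poset_aut_group n R\<^esub> g)
      = twin_proj f \<otimes>\<^bsub>twin_aut_group n R\<^esub> twin_proj g"
    by simp
qed (rule twin_proj_in_twin_auts)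

lemma twin_aut_lift:
  assumes \<psi>: "\<psi> \<in> twin_auts" and g: "g \<in> Bij {0..<n}"
    and compat: "\<And>x. x < n \<Longrightarrow> twin_class (g x) = \<psi> (twin_class x)"
  shows "g \<in> auts" and "twin_proj g = \<psi>"
proof -
  have \<psi>_inj: "inj_on \<psi> (twin_classes n R)"
    using twin_aut_Bij[OF \<psi>] by (simp add: Bij_def bij_betw_def)
  have g_less: "g x < n" if "x < n" for x
    using g that Bij_imp_funcset by fastforce
  have g_inj: "inj_on g {0..<n}"
    using g by (simp add: Bij_def bij_betw_def)
  have class_mem: "twin_class x \<in> twin_classes n R" if "x < n" for x
    using that by (simp add: twin_classes_eq)
  have rel: "R (g x) (g y) \<longleftrightarrow> R x y" if x: "x < n" and y: "y < n" for x y
  proof (cases "twins n R x y")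
    case True
    then have "twins n R (g x) (g y)"
      using compat x y g_less by (metis twin_class_eq_iff)
    then show ?thesis
      using True x y g_less g_inj twins_rel_iff_eq by (metis atLeastLessThan_iff inj_on_eq_iff zero_le)
  next
    case False
    then have "\<psi> (twin_class x) \<noteq> \<psi> (twin_class y)"
      using x y class_mem twin_class_eq_iff inj_onD[OF \<psi>_inj] by metis
    then have not_twins: "\<not> twins n R (g x) (g y)"
      using compat x y g_less twin_class_eq_iff by metis
    have "R x y \<longleftrightarrow> twin_le R (twin_class x) (twin_class y)"
      using False x y by (simp add: twin_le_twin_class_iff)
    also have "\<dots> \<longleftrightarrow> twin_le R (\<psi> (twin_class x)) (\<psi> (twin_class y))"
      using \<psi> x y class_mem by (simp add: twin_aut_le_iff)
    also have "\<dots> \<longleftrightarrow> R (g x) (g y)"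
      using not_twins x y g_less by (simp add: twin_le_twin_class_iff flip: compat)
    finally show ?thesis
      by (rule sym)
  qed
  show g_aut: "g \<in> auts"
    using g rel by (simp add: auts_iff)
  show "twin_proj g = \<psi>"
  proof (rule extensionalityI)
    fix \<alpha> assume "\<alpha> \<in> twin_classes n R"
    then obtain x where "x < n" "\<alpha> = twin_class x"
      by (auto simp: twin_classes_eq)
    then show "twin_proj g \<alpha> = \<psi> \<alpha>"
      by (simp add: twin_proj_twin_class image_twin_class[OF g_aut] compat)
  qed (use twin_aut_Bij[OF \<psi>] in \<open>simp_all add: twin_proj_def Bij_def\<close>)
qed

lemma image_twin_proj: "twin_proj ` auts = size_pres_auts n R"
proof
  show "twin_proj ` auts \<subseteq> size_pres_auts n R"
  proof clarify
    fix f assume f: "f \<in> auts"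
    have "card (twin_proj f \<alpha>) = card \<alpha>" if "\<alpha> \<in> twin_classes n R" for \<alpha>
    proof -
      have "inj_on f \<alpha>"
        using aut_Bij[OF f] that twin_class_subset
        by (auto simp: Bij_def bij_betw_def twin_classes_eq intro: inj_on_subset)
      then show ?thesis
        using that by (simp add: twin_proj_def card_image)
    qed
    with f show "twin_proj f \<in> size_pres_auts n R"
      by (simp add: size_pres_auts_def twin_proj_in_twin_auts)
  qed
  show "size_pres_auts n R \<subseteq> twin_proj ` auts"
  proof
    fix \<psi> assume "\<psi> \<in> size_pres_auts n R"
    then have \<psi>: "\<psi> \<in> twin_auts" and card: "\<And>\<alpha>. \<alpha> \<in> twin_classes n R \<Longrightarrow> card (\<psi> \<alpha>) = card \<alpha>"
      by (simp_all add: size_pres_auts_def)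
    have "bij_betw \<psi> (twin_classes n R) (twin_classes n R)"
      using twin_aut_Bij[OF \<psi>] by (simp add: Bij_def)
    then obtain g where g: "g \<in> Bij {0..<n}"
      and g_image: "\<And>\<alpha>. \<alpha> \<in> twin_classes n R \<Longrightarrow> g ` \<alpha> = \<psi> \<alpha>"
      using partition_on_lift_bij[OF partition_on_twin_classes _ _ card] by blast
    have "twin_class (g x) = \<psi> (twin_class x)" if "x < n" for x
    proof -
      have "twin_class x \<in> twin_classes n R"
        using that by (simp add: twin_classes_eq)
      then have "g x \<in> \<psi> (twin_class x)" and "\<psi> (twin_class x) \<in> twin_classes n R"
        using g_image twin_class_self[OF that] bij_betwE[OF \<open>bij_betw \<psi> _ _\<close>] by blast+
      then show ?thesis
        using twin_class_eqI by metis
    qed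
    then have "g \<in> auts" and "twin_proj g = \<psi>"
      using twin_aut_lift[OF \<psi> g] by blast+
    then show "\<psi> \<in> twin_proj ` auts"
      by blast
  qed
qed

lemma twin_preserving_perm_in_kernel:
  assumes g: "g \<in> Bij {0..<n}" and twins: "\<And>x. x < n \<Longrightarrow> twins n R x (g x)"
  shows "g \<in> auts" and "twin_proj g = \<one>\<^bsub>twin_aut_group n R\<^esub>"
proof -
  have one: "\<one>\<^bsub>twin_aut_group n R\<^esub> = (\<lambda>\<alpha>\<in>twin_classes n R. \<alpha>)"
    by (simp add: twin_aut_group_def aut_group_def BijGroup_def)
  have "\<one>\<^bsub>twin_aut_group n R\<^esub> \<in> twin_auts"
    unfolding one unfolding twin_aut_group_def by (rule id_in_aut_group)
  moreover have "twin_class (g x) = \<one>\<^bsub>twin_aut_group n R\<^esub> (twin_class x)" if "x < n" for x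
  proof -
    have "twin_class (g x) = twin_class x"
      using that twins twins_sym twin_class_eq_iff by metis
    then show ?thesis
      using that by (simp add: one twin_classes_eq)
  qed
  ultimately show "g \<in> auts" and "twin_proj g = \<one>\<^bsub>twin_aut_group n R\<^esub>"
    using twin_aut_lift[OF _ g] by blast+
qed

lemma inj_on_twin_proj_iff: "inj_on twin_proj auts \<longleftrightarrow> (\<forall>\<alpha>\<in>twin_classes n R. card \<alpha> = 1)"
proof
  assume singletons: "\<forall>\<alpha>\<in>twin_classes n R. card \<alpha> = 1"
  have twin_class_singleton: "twin_class x = {x}" if x: "x < n" for x
  proof -
    have "card (twin_class x) = 1"
      using singletons x by (simp add: twin_classes_eq)
    then obtain z where "twin_class x = {z}"
      by (rule card_1_singletonE)
    with twin_class_self[OF x] show ?thesis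
      by simp
  qed
  show "inj_on twin_proj auts"
  proof (rule inj_onI)
    fix f g assume "f \<in> auts" "g \<in> auts" and eq: "twin_proj f = twin_proj g"
    show "f = g"
    proof (rule extensionalityI)
      fix x assume "x \<in> {0..<n}"
      then have "twin_proj f (twin_class x) = f ` twin_class x"
        "twin_proj g (twin_class x) = g ` twin_class x"
        by (simp_all add: twin_proj_twin_class)
      then show "f x = g x"
        using eq twin_class_singleton \<open>x \<in> {0..<n}\<close> by simp
    qed (use \<open>f \<in> auts\<close> \<open>g \<in> auts\<close> in \<open>simp_all add: aut_Bij Bij_imp_extensional\<close>)
  qed
next
  assume inj: "inj_on twin_proj auts"
  show "\<forall>\<alpha>\<in>twin_classes n R. card \<alpha> = 1"
  proof (rule ccontr)
    assume "\<not> (\<forall>\<alpha>\<in>twin_classes n R. card \<alpha> = 1)"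
    then obtain x where x: "x < n" and card: "card (twin_class x) \<noteq> 1"
      by (auto simp: twin_classes_eq)
    have "twin_class x \<noteq> {x}"
      using card by auto
    then obtain y where y: "y \<in> twin_class x" "y \<noteq> x"
      using twin_class_self[OF x] by blast
    define \<tau> where "\<tau> = restrict (transpose x y) {0..<n}"
    define \<iota> where "\<iota> = restrict id {0..<n}"
    have \<tau>_bij: "\<tau> \<in> Bij {0..<n}" and \<iota>_bij: "\<iota> \<in> Bij {0..<n}"
      using x y by (auto simp: \<tau>_def \<iota>_def Bij_def mem_twin_class)
    have \<tau>_twins: "twins n R z (\<tau> z)" and \<iota>_twins: "twins n R z (\<iota> z)" if "z < n" for z
      using that y by (auto simp: \<tau>_def \<iota>_def transpose_def mem_twin_class twins_refl twins_sym)
    have "\<tau> \<in> auts" "\<iota> \<in> auts" and "twin_proj \<tau> = twin_proj \<iota>"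
      using twin_preserving_perm_in_kernel[OF \<tau>_bij \<tau>_twins]
        twin_preserving_perm_in_kernel[OF \<iota>_bij \<iota>_twins] by simp_all
    then have "\<tau> = \<iota>"
      using inj_onD[OF inj] by blast
    moreover have "\<tau> x \<noteq> \<iota> x"
      using x y by (simp add: \<tau>_def \<iota>_def)
    ultimately show False
      by simp
  qed
qed

end

lemma nl_poset_refl_nat_relation:
  assumes "nl_poset n R"
  shows "refl_nat_relation n R"
proof
  show "x < n \<and> y < n" if "R x y" for x y
    using assms that unfolding nl_poset_def by blast
  show "R x x" if "x < n" for x
    using assms that unfolding nl_poset_def by blast
qed

theorem proposition4p9:
  fixes n m :: nat and R :: "nat \<Rightarrow> nat \<Rightarrow> bool"
  assumes "nl_poset n R"
    and "n \<ge> 1"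
    and "m \<ge> 1"
    and "\<forall>\<alpha>\<in>twin_classes n R. card \<alpha> = m"
  shows "size_pres_auts n R = carrier (twin_aut_group n R) \<and>
         (poset_aut_group n R \<cong> twin_aut_group n R \<longleftrightarrow> m = 1)"
proof -
  interpret refl_nat_relation n R
    using assms(1) by (rule nl_poset_refl_nat_relation)
  have "\<psi> \<alpha> \<in> twin_classes n R" if "\<psi> \<in> twin_auts" "\<alpha> \<in> twin_classes n R" for \<psi> \<alpha>
    using twin_aut_Bij[OF that(1)] that(2) unfolding Bij_def bij_betw_def by blast
  with assms(4) have H: "size_pres_auts n R = twin_auts"
    by (auto simp: size_pres_auts_def)
  then have onto: "twin_proj ` auts = twin_auts"
    by (simp add: image_twin_proj)
  have "finite auts"
    by (simp add: poset_aut_group_def finite_carrier_aut_group)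
  have "poset_aut_group n R \<cong> twin_aut_group n R \<longleftrightarrow> inj_on twin_proj auts"
  proof
    assume "poset_aut_group n R \<cong> twin_aut_group n R"
    then have "card auts = card twin_auts"
      by (rule iso_same_card)
    then have "card (twin_proj ` auts) = card auts"
      by (simp add: onto)
    with \<open>finite auts\<close> show "inj_on twin_proj auts"
      by (rule eq_card_imp_inj_on)
  next
    assume "inj_on twin_proj auts"
    with twin_proj_hom onto have "twin_proj \<in> iso (poset_aut_group n R) (twin_aut_group n R)"
      by (simp add: iso_def bij_betw_def)
    then show "poset_aut_group n R \<cong> twin_aut_group n R"
      by (rule is_isoI)
  qed
  also have "\<dots> \<longleftrightarrow> m = 1"
  proof -
    have "twin_class 0 \<in> twin_classes n R"
      using assms(2) by (simp add: twin_classes_eq)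
    then have "(\<forall>\<alpha>\<in>twin_classes n R. card \<alpha> = 1) \<longleftrightarrow> m = 1"
      using assms(4) by auto
    then show ?thesis
      by (simp add: inj_on_twin_proj_iff)
  qed
  finally show ?thesis
    using H by simp
qed

end
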